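(* Let $\gamma>0$ and $\alpha=2/\gamma^2$. Then for all $z\in\mathbb{C}$ and $x\in\mathbb{R}$, $$\mathcal{A}^\gamma_{RBF}(z,x)=\exp\left(-\frac{z^2}{\gamma^2}\right)\mathcal{A}^\alpha_{SB}(z,x).$$
   Context: For $\alpha>0$, the Segal–Bargmann kernel is $\mathcal{A}^\alpha_{SB}(z,x)=\left(\frac{\alpha}{\pi}\right)^{1/4}\exp\left(-\frac{\alpha}{2}(z^2+x^2)+\sqrt2\,\alpha zx\right)$. The normalized weighted Hermite functions are $\psi_n^\alpha(x)=\left(\frac{\alpha}{\pi}\right)^{1/4}(2^nn!)^{-1/2}H_n(\sqrt\alpha\,x)e^{-\alpha x^2/2}$, $n\ge0$, where $H_n$ are the physicists' Hermite polynomials; they form an orthonormal basis of $L^2(\mathbb{R})$. For $\gamma>0$, $e_n^\gamma(z)=\sqrt{\frac{2^n}{\gamma^{2n}n!}}\,z^n\exp(-z^2/\gamma^2)$, and the RBF Segal–Bargmann kernel is $\mathcal{A}^\gamma_{RBF}(z,x)=\sum_{n=0}^\infty e_n^\gamma(z)\psi_n^{\alpha}(x)$ with $\alpha=2/\gamma^2$. *)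

theory Defs
  imports "HOL-Analysis.Analysis"
begin

fun hermite :: "nat \<Rightarrow> real \<Rightarrow> real" where
  "hermite 0 x = 1"
| "hermite (Suc 0) x = 2 * x"
| "hermite (Suc (Suc n)) x = 2 * x * hermite (Suc n) x - 2 * real (Suc n) * hermite n x"

definition hermite_fun :: "real \<Rightarrow> nat \<Rightarrow> real \<Rightarrow> real" where
  "hermite_fun \<alpha> n x =
     (\<alpha> / pi) powr (1/4) * (1 / sqrt (2 ^ n * fact n)) * hermite n (sqrt \<alpha> * x)
       * exp (- \<alpha> * x\<^sup>2 / 2)"

definition SB_kernel :: "real \<Rightarrow> complex \<Rightarrow> real \<Rightarrow> complex" where
  "SB_kernel \<alpha> z x =
     complex_of_real ((\<alpha> / pi) powr (1/4))
       * exp (- (complex_of_real \<alpha> / 2) * (z\<^sup>2 + complex_of_real (x\<^sup>2))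
              + complex_of_real (sqrt 2 * \<alpha>) * z * complex_of_real x)"

definition rbf_e :: "real \<Rightarrow> nat \<Rightarrow> complex \<Rightarrow> complex" where
  "rbf_e \<gamma> n z =
     complex_of_real (sqrt (2 ^ n / (\<gamma> ^ (2 * n) * fact n))) * z ^ n
       * exp (- z\<^sup>2 / complex_of_real (\<gamma>\<^sup>2))"

definition RBF_kernel :: "real \<Rightarrow> complex \<Rightarrow> real \<Rightarrow> complex" where
  "RBF_kernel \<gamma> z x =
     (\<Sum>n. rbf_e \<gamma> n z * complex_of_real (hermite_fun (2 / \<gamma>\<^sup>2) n x))"

end

theory Submission imports Defs "HOL-Complex_Analysis.Complex_Analysis" begin

text \<open>With \<open>y = \<surd>\<alpha> x\<close> and \<open>t = z/\<gamma>\<close> the normalising constants of the \<open>n\<close>-th term collapse to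
  \<open>1/(\<gamma>\<^sup>n n!)\<close>, so the series is a Gaussian factor times the Hermite generating function
  \<open>\<Sum> H\<^sub>n(y) t\<^sup>n/n! = exp (2yt - t\<^sup>2)\<close>; completing the exponent gives the Segal--Bargmann kernel.
  The generating function is the Taylor series of the entire function \<open>t \<mapsto> exp (2yt - t\<^sup>2)\<close>,
  whose \<open>n\<close>-th derivative is \<open>H\<^sub>n(y - t) exp (2yt - t\<^sup>2)\<close> because \<open>H\<^sub>n' = 2n H\<^sub>n\<^sub>-\<^sub>1\<close>.\<close>

fun hermite_ring :: "nat \<Rightarrow> 'a::comm_ring_1 \<Rightarrow> 'a" where
  "hermite_ring 0 x = 1"
| "hermite_ring (Suc 0) x = 2 * x"
| "hermite_ring (Suc (Suc n)) x =
     2 * x * hermite_ring (Suc n) x - 2 * of_nat (Suc n) * hermite_ring n x"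

lemma hermite_ring_Suc:
  "hermite_ring (Suc n) x = 2 * x * hermite_ring n x - 2 * of_nat n * hermite_ring (n - 1) x"
  by (cases n) auto

lemma hermite_ring_of_real:
  "hermite_ring n (of_real y :: 'a::{real_algebra_1, comm_ring_1}) = of_real (hermite n y)"
  by (induction n y rule: hermite.induct) auto

lemma hermite_ring_has_field_derivative:
  fixes x :: "'a::real_normed_field"
  shows "(hermite_ring n has_field_derivative 2 * of_nat n * hermite_ring (n - 1) x) (at x)"
proof (induction n x rule: hermite_ring.induct)
  case (1 x)
  then show ?case by simp
next
  case (2 x)
  then show ?case by (auto intro!: derivative_eq_intros)
next
  case (3 n x)
  have "hermite_ring (Suc (Suc n)) =
      (\<lambda>x. 2 * x * hermite_ring (Suc n) x - 2 * of_nat (Suc n) * hermite_ring n x)"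
    by auto
  then show ?case
    by (auto intro!: derivative_eq_intros 3 simp: hermite_ring_Suc[of n x] algebra_simps)
qed

lemma higher_deriv_hermite_exp:
  fixes y :: complex
  shows "(deriv ^^ n) (\<lambda>t. exp (2 * y * t - t\<^sup>2)) =
           (\<lambda>t. hermite_ring n (y - t) * exp (2 * y * t - t\<^sup>2))"
proof (induction n)
  case 0
  then show ?case by simp
next
  case (Suc n)
  have "((\<lambda>t. hermite_ring n (y - t) * exp (2 * y * t - t\<^sup>2)) has_field_derivative
          hermite_ring (Suc n) (y - t) * exp (2 * y * t - t\<^sup>2)) (at t)" for t
  proof -
    have "((\<lambda>t. hermite_ring n (y - t)) has_field_derivative
            2 * of_nat n * hermite_ring (n - 1) (y - t) * (-1)) (at t)"
      by (rule DERIV_chain2[OF hermite_ring_has_field_derivative])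
         (auto intro!: derivative_eq_intros)
    then show ?thesis
      by (auto intro!: derivative_eq_intros
               simp: hermite_ring_Suc[of n "y - t"] algebra_simps power2_eq_square)
  qed
  then show ?case
    by (simp add: Suc.IH fun_eq_iff DERIV_imp_deriv)
qed

lemma hermite_generating_function:
  fixes y t :: complex
  shows "(\<lambda>n. hermite_ring n y / fact n * t ^ n) sums exp (2 * y * t - t\<^sup>2)"
proof -
  have "(\<lambda>t. exp (2 * y * t - t\<^sup>2)) holomorphic_on ball 0 (norm t + 1)"
    by (intro holomorphic_intros)
  from holomorphic_power_series[OF this, of t] show ?thesis
    by (simp add: higher_deriv_hermite_exp)
qed

lemma rbf_hermite_coeff:
  fixes \<gamma> :: real
  assumes "\<gamma> > 0"
  shows "sqrt (2 ^ n / (\<gamma> ^ (2 * n) * fact n)) * (1 / sqrt (2 ^ n * fact n)) =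
           1 / (\<gamma> ^ n * fact n)"
proof -
  have "\<gamma> ^ (2 * n) = (\<gamma> ^ n)\<^sup>2"
    by (simp add: mult.commute[of 2 n] power_mult)
  then have "sqrt (\<gamma> ^ (2 * n)) = \<gamma> ^ n"
    using assms by simp
  moreover have "sqrt (fact n) * sqrt (fact n) = (fact n :: real)"
    by simp
  ultimately show ?thesis
    by (simp add: real_sqrt_divide real_sqrt_mult field_simps)
qed

lemma rbf_e_mult_hermite_fun:
  fixes \<gamma> \<alpha> x :: real and z :: complex
  assumes "\<gamma> > 0"
  shows "rbf_e \<gamma> n z * complex_of_real (hermite_fun \<alpha> n x) =
           complex_of_real ((\<alpha> / pi) powr (1/4) * exp (- \<alpha> * x\<^sup>2 / 2))
           * exp (- z\<^sup>2 / complex_of_real (\<gamma>\<^sup>2))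
           * (hermite_ring n (complex_of_real (sqrt \<alpha> * x)) / fact n * (z / complex_of_real \<gamma>) ^ n)"
proof -
  have coeff: "complex_of_real (sqrt (2 ^ n / (\<gamma> ^ (2 * n) * fact n))) *
      complex_of_real (1 / sqrt (2 ^ n * fact n)) = 1 / (complex_of_real \<gamma> ^ n * fact n)"
    using rbf_hermite_coeff[OF assms, of n]
    by (metis of_real_mult of_real_divide of_real_1 of_real_power of_real_fact)
  show ?thesis
    unfolding rbf_e_def hermite_fun_def hermite_ring_of_real
    using coeff assms by (simp add: field_simps power_divide)
qed

lemma SB_kernel_eq_hermite_exp:
  fixes \<gamma> \<alpha> x :: real and z :: complex
  assumes "\<gamma> > 0" and "\<alpha> = 2 / \<gamma>\<^sup>2"
  shows "SB_kernel \<alpha> z x =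
           complex_of_real ((\<alpha> / pi) powr (1/4) * exp (- \<alpha> * x\<^sup>2 / 2))
           * exp (2 * complex_of_real (sqrt \<alpha> * x) * (z / complex_of_real \<gamma>)
                  - (z / complex_of_real \<gamma>)\<^sup>2)"
proof -
  have sqrt_\<alpha>: "sqrt \<alpha> = sqrt 2 / \<gamma>"
    using assms by (simp add: real_sqrt_divide)
  have exponent: "- (complex_of_real \<alpha> / 2) * (z\<^sup>2 + complex_of_real (x\<^sup>2))
          + complex_of_real (sqrt 2 * \<alpha>) * z * complex_of_real x =
        complex_of_real (- \<alpha> * x\<^sup>2 / 2)
          + (2 * complex_of_real (sqrt \<alpha> * x) * (z / complex_of_real \<gamma>) - (z / complex_of_real \<gamma>)\<^sup>2)"
    unfolding sqrt_\<alpha> unfolding assms(2) using assms(1)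
    by (simp add: field_simps power2_eq_square)
  show ?thesis
    unfolding SB_kernel_def exponent exp_add by (simp add: of_real_exp)
qed

theorem mainTheorem8:
  fixes \<gamma> \<alpha> :: real and z :: complex and x :: real
  assumes "\<gamma> > 0" and "\<alpha> = 2 / \<gamma>\<^sup>2"
  shows "(\<lambda>n. rbf_e \<gamma> n z * complex_of_real (hermite_fun \<alpha> n x)) sums
           (exp (- z\<^sup>2 / complex_of_real (\<gamma>\<^sup>2)) * SB_kernel \<alpha> z x)
         \<and> RBF_kernel \<gamma> z x = exp (- z\<^sup>2 / complex_of_real (\<gamma>\<^sup>2)) * SB_kernel \<alpha> z x"
proof -
  have "(\<lambda>n. rbf_e \<gamma> n z * complex_of_real (hermite_fun \<alpha> n x)) sums
          (complex_of_real ((\<alpha> / pi) powr (1/4) * exp (- \<alpha> * x\<^sup>2 / 2))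
           * exp (- z\<^sup>2 / complex_of_real (\<gamma>\<^sup>2))
           * exp (2 * complex_of_real (sqrt \<alpha> * x) * (z / complex_of_real \<gamma>)
                  - (z / complex_of_real \<gamma>)\<^sup>2))"
    unfolding rbf_e_mult_hermite_fun[OF assms(1)]
    by (intro sums_mult hermite_generating_function)
  then have "(\<lambda>n. rbf_e \<gamma> n z * complex_of_real (hermite_fun \<alpha> n x)) sums
          (exp (- z\<^sup>2 / complex_of_real (\<gamma>\<^sup>2)) * SB_kernel \<alpha> z x)"
    by (simp add: SB_kernel_eq_hermite_exp[OF assms] mult_ac)
  then show ?thesis
    unfolding RBF_kernel_def using assms(2) by (simp add: sums_iff)
qed

end
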